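(* Let $c\ge0$, $\gamma\ge0$, $\sigma^2>0$ and $\alpha\in(0,1]$. Then the function $$f(x)=\frac{c+\gamma\sigma^{2\alpha}\left(2^{x}-1\right)^{\alpha}}{x}$$ is convex on $(0,\infty)$. In particular this holds with $c=P_0-P_{\mathrm{sleep}}$ whenever $P_0\ge P_{\mathrm{sleep}}$.
   Context: $P_0\ge0$ is the load-independent active power consumption and $P_{\mathrm{sleep}}$ a constant sleep power consumption. *)

theory Defs
  imports "HOL-Analysis.Analysis"
begin

end

theory Submission
  imports Defs
begin

text \<open>Write \<open>f x = c / x + K g x\<close> with \<open>K = \<gamma> (\<sigma>\<^sup>2) powr \<alpha> \<ge> 0\<close> and \<open>g x = (2 powr x - 1) powr \<alpha> / x\<close>. The term \<open>c / x\<close> is convex, and \<open>g\<close> is even log-convex: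
  with \<open>y = x ln 2\<close>, the second derivative of \<open>ln g x = \<alpha> ln (exp y - 1) - ln x\<close> is
  \<open>1/x\<^sup>2 - \<alpha> (ln 2)\<^sup>2 exp y / (exp y - 1)\<^sup>2\<close>, which is nonnegative because \<open>\<alpha> \<le> 1\<close> and
  \<open>y exp (y/2) \<le> exp y - 1\<close>, i.e. \<open>y/2 \<le> sinh (y/2)\<close>.\<close>

lemma mult_exp_half_le_exp_minus_one:
  fixes y :: real
  assumes "0 \<le> y"
  shows "y * exp (y/2) \<le> exp y - 1"
proof -
  have "y \<le> exp (y/2) - inverse (exp (y/2))"
    using real_le_x_sinh[of "y/2"] assms by simp
  then have "y * exp (y/2) \<le> (exp (y/2) - inverse (exp (y/2))) * exp (y/2)"
    by (simp add: mult_right_mono)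
  also have "\<dots> = exp y - 1"
    by (simp add: left_diff_distrib flip: exp_add)
  finally show ?thesis .
qed

lemma convex_on_cong:
  fixes f g :: "'a::real_vector \<Rightarrow> real"
  assumes "\<And>x. x \<in> S \<Longrightarrow> f x = g x"
  shows "convex_on S f \<longleftrightarrow> convex_on S g"
proof -
  have "convex_on S g" if f: "convex_on S f" and fg: "\<And>x. x \<in> S \<Longrightarrow> f x = g x"
    for f g :: "'a \<Rightarrow> real"
  proof (rule convex_onI)
    show "convex S"
      using f by (rule convex_on_imp_convex)
    fix t :: real and x y assume t: "0 < t" "t < 1" and xy: "x \<in> S" "y \<in> S"
    have "(1 - t) *\<^sub>R x + t *\<^sub>R y \<in> S"
      using convexD[OF \<open>convex S\<close> xy, of "1 - t" t] t by simp
    then show "g ((1 - t) *\<^sub>R x + t *\<^sub>R y) \<le> (1 - t) * g x + t * g y"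
      using convex_onD[OF f, of t x y] t xy fg by simp
  qed
  then show ?thesis
    using assms by (metis)
qed
lemma convex_on_exp_comp:
  assumes "convex_on S (f :: 'a::real_vector \<Rightarrow> real)"
  shows "convex_on S (\<lambda>x. exp (f x))"
proof (rule convex_onI)
  show "convex S"
    using assms by (rule convex_on_imp_convex)
next
  fix t :: real and x y assume t: "0 < t" "t < 1" and xy: "x \<in> S" "y \<in> S"
  have "exp (f ((1 - t) *\<^sub>R x + t *\<^sub>R y)) \<le> exp ((1 - t) * f x + t * f y)"
    using convex_onD[OF assms, of t x y] t xy by simp
  also have "\<dots> \<le> (1 - t) * exp (f x) + t * exp (f y)"
    using convex_onD[OF exp_convex, of t "f x" "f y"] t by simp
  finally show "exp (f ((1 - t) *\<^sub>R x + t *\<^sub>R y)) \<le> (1 - t) * exp (f x) + t * exp (f y)" .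
qed

lemma convex_on_ln_exp_minus_one_minus_ln:
  fixes \<alpha> L :: real
  assumes "0 \<le> \<alpha>" "\<alpha> \<le> 1" "0 < L"
  shows "convex_on {0<..} (\<lambda>x. \<alpha> * ln (exp (L * x) - 1) - ln x)"
proof (rule f''_ge0_imp_convex)
  fix x :: real assume "x \<in> {0<..}"
  then have x: "0 < x" by simp
  define y where "y = L * x"
  have y: "0 \<le> y" "0 < exp y - 1"
    using x assms by (simp_all add: y_def)
  show "DERIV (\<lambda>x. \<alpha> * ln (exp (L * x) - 1) - ln x) x :>
          \<alpha> * L * exp (L * x) / (exp (L * x) - 1) - 1 / x"
    using x y by (auto intro!: derivative_eq_intros simp: y_def field_simps)
  show "DERIV (\<lambda>x. \<alpha> * L * exp (L * x) / (exp (L * x) - 1) - 1 / x) x :>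
          1 / x\<^sup>2 - \<alpha> * L\<^sup>2 * exp (L * x) / (exp (L * x) - 1)\<^sup>2"
    using x y by (auto intro!: derivative_eq_intros simp: y_def field_simps power2_eq_square)
  have "exp (y/2) ^ 2 = exp y"
    by (simp add: power2_eq_square flip: exp_add)
  then have "\<alpha> * (y\<^sup>2 * exp y) \<le> (y * exp (y/2))\<^sup>2"
    using assms by (simp add: power_mult_distrib mult_left_le_one_le)
  also have "\<dots> \<le> (exp y - 1)\<^sup>2"
    using mult_exp_half_le_exp_minus_one[OF y(1)] y by (simp add: power_mono)
  finally have "\<alpha> * L\<^sup>2 * exp y * x\<^sup>2 \<le> (exp y - 1)\<^sup>2"
    by (simp add: y_def power_mult_distrib algebra_simps)
  then have "\<alpha> * L\<^sup>2 * exp y / (exp y - 1)\<^sup>2 \<le> 1 / x\<^sup>2"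
    using x y by (simp add: field_simps)
  then show "0 \<le> 1 / x\<^sup>2 - \<alpha> * L\<^sup>2 * exp (L * x) / (exp (L * x) - 1)\<^sup>2"
    by (simp add: y_def)
qed simp

lemma convex_on_powr_minus_one_powr_div:
  fixes b \<alpha> :: real
  assumes "1 < b" "0 \<le> \<alpha>" "\<alpha> \<le> 1"
  shows "convex_on {0<..} (\<lambda>x. (b powr x - 1) powr \<alpha> / x)"
proof -
  have log_convex: "convex_on {0<..} (\<lambda>x. exp (\<alpha> * ln (exp (ln b * x) - 1) - ln x))"
    using assms by (intro convex_on_exp_comp convex_on_ln_exp_minus_one_minus_ln) auto
  have "exp (\<alpha> * ln (exp (ln b * x) - 1) - ln x) = (b powr x - 1) powr \<alpha> / x"
    if "x \<in> {0<..}" for x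
  proof -
    have "exp (ln b * x) - 1 > 0"
      using that assms by simp
    then show ?thesis
      using that assms by (simp add: exp_diff powr_def mult.commute)
  qed
  then show ?thesis
    using log_convex by (rule convex_on_cong[THEN iffD1])
qed

theorem lemma4:
  fixes c \<gamma> \<sigma> \<alpha> :: real
  assumes "c \<ge> 0" and "\<gamma> \<ge> 0" and "\<sigma>\<^sup>2 > 0"
    and "0 < \<alpha>" and "\<alpha> \<le> 1"
  shows "convex_on {0<..}
           (\<lambda>x::real. (c + \<gamma> * (\<sigma>\<^sup>2) powr \<alpha> * (2 powr x - 1) powr \<alpha>) / x)"
proof -
  define K where "K = \<gamma> * (\<sigma>\<^sup>2) powr \<alpha>"
  have "convex_on {0<..} (\<lambda>x::real. c * inverse x + K * ((2 powr x - 1) powr \<alpha> / x))"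
    using assms unfolding K_def
    by (intro convex_on_add convex_on_cmul convex_on_inverse convex_on_powr_minus_one_powr_div)
      auto
  moreover have "(\<lambda>x::real. (c + K * (2 powr x - 1) powr \<alpha>) / x)
      = (\<lambda>x. c * inverse x + K * ((2 powr x - 1) powr \<alpha> / x))"
    by (simp add: fun_eq_iff divide_inverse distrib_right)
  ultimately show ?thesis
    by (simp add: K_def)
qed

end
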